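(* Let $\mathcal{S}$ be a set of states, $\mathcal{E}$ a set of events, and $\rightarrow$ a small-step transition relation $s \xrightarrow{t} s'$ on $\mathcal{S}$ labelled by finite traces $t \in \mathcal{E}^*$. Let $s \in \mathcal{S}$, let $\tau$ be a general trace (a finite or infinite sequence of events), and suppose there exists $n \in \mathbb{N}_0$ with $\mathrm{Forever}(s, \tau, n)$. Then: (1) if $\tau$ is finite, then $\mathrm{ForeverFinite}(\tau, s)$; (2) if $\tau$ is infinite, then $\mathrm{Reacts}(\tau, s)$. Moreover, if $\rightarrow$ is determinate, the converse also holds: for finite $\tau$, $\mathrm{ForeverFinite}(\tau, s)$ implies that there is an $n\in\mathbb{N}_0$ with $\mathrm{Forever}(s,\tau,n)$; and for infinite $\tau$, $\mathrm{Reacts}(\tau, s)$ implies that there is an $n\in\mathbb{N}_0$ with $\mathrm{Forever}(s,\tau,n)$.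
   Context: Traces: $\varepsilon$ denotes the empty trace and $t\cdot\tau$ denotes concatenation of a finite trace $t$ with a finite or infinite trace $\tau$. For finite traces, $s \xrightarrow{t}{}^{*} s'$ denotes the reflexive–transitive closure of the step relation: $s \xrightarrow{\varepsilon}{}^{*} s$, and if $s \xrightarrow{t_1} s_1$ and $s_1 \xrightarrow{t_2}{}^{*} s'$ then $s \xrightarrow{t_1\cdot t_2}{}^{*} s'$. The following predicates are defined coinductively (as greatest fixed points of the given rules): - Silent divergence $\mathrm{DivSilent}(s)$: if $s \xrightarrow{\varepsilon} s'$ and $\mathrm{DivSilent}(s')$ then $\mathrm{DivSilent}(s)$. - (Inductive, no recursion) Finite-trace divergence $\mathrm{ForeverFinite}(t, s)$ for finite $t$: holds iff there is $s'$ with $s \xrightarrow{t}{}^{*} s'$ and $\mathrm{DivSilent}(s')$. - Reactive divergence $\mathrm{Reacts}(\omega, s)$ for infinite $\omega$: if $s \xrightarrow{t}{}^{*} s'$, $t \neq \varepsilon$, and $\mathrm{Reacts}(\omega, s')$, then $\mathrm{Reacts}(t\cdot\omega, s)$. - General-trace divergence $\mathrm{Forever}(s, \tau, n)$ for a general (finite or infinite) trace $\tau$ and $n \in \mathbb{N}_0$: if $s \xrightarrow{t} s'$, $\mathrm{Forever}(s', \tau, m)$ for some $m\in\mathbb{N}_0$, and $\mathrm{guard}(\tau, n, t, m)$, then $\mathrm{Forever}(s, t\cdot\tau, n)$, where $\mathrm{guard}(\tau,n,t,m)$ means: $\tau = \varepsilon$, or ($t = \varepsilon$ implies $m < n$).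 Determinacy (in the sense of CompCert): the step relation is determinate if every single step $s \xrightarrow{t} s'$ has a trace $t$ of length at most one, and whenever $s \xrightarrow{t_1} s_1$ and $s \xrightarrow{t_2} s_2$ from the same state $s$, then $t_1$ and $t_2$ match (in particular $t_1 = \varepsilon$ iff $t_2 = \varepsilon$), and $t_1 = t_2$ implies $s_1 = s_2$. *)

theory Defs
  imports Main "HOL-Library.Stream"
begin

datatype 'e gtrace = Fin "'e list" | Inf "'e stream"

fun gconcat :: "'e list \<Rightarrow> 'e gtrace \<Rightarrow> 'e gtrace" where
  "gconcat t (Fin u) = Fin (t @ u)"
| "gconcat t (Inf w) = Inf (t @- w)"

inductive star :: "('s \<Rightarrow> 'e list \<Rightarrow> 's \<Rightarrow> bool) \<Rightarrow> 's \<Rightarrow> 'e list \<Rightarrow> 's \<Rightarrow> bool"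
  for step where
  star_refl: "star step s [] s"
| star_step: "step s t1 s1 \<Longrightarrow> star step s1 t2 s' \<Longrightarrow> star step s (t1 @ t2) s'"

coinductive DivSilent :: "('s \<Rightarrow> 'e list \<Rightarrow> 's \<Rightarrow> bool) \<Rightarrow> 's \<Rightarrow> bool"
  for step where
  "step s [] s' \<Longrightarrow> DivSilent step s' \<Longrightarrow> DivSilent step s"

definition ForeverFinite :: "('s \<Rightarrow> 'e list \<Rightarrow> 's \<Rightarrow> bool) \<Rightarrow> 'e list \<Rightarrow> 's \<Rightarrow> bool" where
  "ForeverFinite step t s \<longleftrightarrow> (\<exists>s'. star step s t s' \<and> DivSilent step s')"

coinductive Reacts :: "('s \<Rightarrow> 'e list \<Rightarrow> 's \<Rightarrow> bool) \<Rightarrow> 'e stream \<Rightarrow> 's \<Rightarrow> bool"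
  for step where
  "star step s t s' \<Longrightarrow> t \<noteq> [] \<Longrightarrow> Reacts step \<omega> s' \<Longrightarrow> Reacts step (t @- \<omega>) s"

definition guard :: "'e gtrace \<Rightarrow> nat \<Rightarrow> 'e list \<Rightarrow> nat \<Rightarrow> bool" where
  "guard \<tau> n t m \<longleftrightarrow> \<tau> = Fin [] \<or> (t = [] \<longrightarrow> m < n)"

coinductive Forever :: "('s \<Rightarrow> 'e list \<Rightarrow> 's \<Rightarrow> bool) \<Rightarrow> 's \<Rightarrow> 'e gtrace \<Rightarrow> nat \<Rightarrow> bool"
  for step where
  "step s t s' \<Longrightarrow> Forever step s' \<tau> m \<Longrightarrow> guard \<tau> n t m \<Longrightarrow> Forever step s (gconcat t \<tau>) n"

text \<open>Determinacy (CompCert style). Matching of traces is rendered by its stated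
consequence: both empty or both nonempty.\<close>
definition determinate :: "('s \<Rightarrow> 'e list \<Rightarrow> 's \<Rightarrow> bool) \<Rightarrow> bool" where
  "determinate step \<longleftrightarrow>
     (\<forall>s t s'. step s t s' \<longrightarrow> length t \<le> 1) \<and>
     (\<forall>s t1 s1 t2 s2. step s t1 s1 \<longrightarrow> step s t2 s2 \<longrightarrow>
        (t1 = [] \<longleftrightarrow> t2 = []) \<and> (t1 = t2 \<longrightarrow> s1 = s2))"

end

theory Submission
  imports Defs
begin

text \<open>The index of \<open>Forever\<close> strictly decreases along silent steps (unless the remaining
trace is empty), so well-founded induction on it shows that every \<open>Forever\<close> state reaches,
after finitely many steps, a state that has emitted a nonempty prefix of the trace and is
again a \<open>Forever\<close> state. On a finite trace, iterating this consumes the trace and leaves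
\<open>Forever s' (Fin []) m\<close>, which is silent divergence; on an infinite trace it is exactly the
unfolding of \<open>Reacts\<close>. Conversely, an index that works is the number of steps left until
the next event is emitted.\<close>

lemma gconcat_Nil [simp]: "gconcat [] \<tau> = \<tau>"
  by (cases \<tau>) auto

lemma gconcat_append [simp]: "gconcat t (gconcat u \<tau>) = gconcat (t @ u) \<tau>"
  by (cases \<tau>) auto

lemma star_single: "step s t s' \<Longrightarrow> star step s t s'"
  using star_step[OF _ star_refl] by fastforce

lemma star_trans: "star step s t s' \<Longrightarrow> star step s' u s'' \<Longrightarrow> star step s (t @ u) s''"
  by (induction rule: star.induct) (auto intro: star.intros)

text \<open>The step count supplies the index of \<open>Forever\<close> when going back from \<open>Reacts\<close>.\<close>

inductive starn :: "('s \<Rightarrow> 'e list \<Rightarrow> 's \<Rightarrow> bool) \<Rightarrow> 's \<Rightarrow> 'e list \<Rightarrow> 's \<Rightarrow> nat \<Rightarrow> bool"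
  for step where
  starn_refl: "starn step s [] s 0"
| starn_step: "step s t1 s1 \<Longrightarrow> starn step s1 t2 s' k \<Longrightarrow> starn step s (t1 @ t2) s' (Suc k)"

lemma star_imp_starn: "star step s t s' \<Longrightarrow> \<exists>k. starn step s t s' k"
  by (induction rule: star.induct) (auto intro: starn.intros)

lemma starn_trans:
  "starn step s t s' k \<Longrightarrow> starn step s' u s'' j \<Longrightarrow> starn step s (t @ u) s'' (k + j)"
  by (induction rule: starn.induct) (auto intro: starn.intros)

lemma Forever_Nil_imp_DivSilent: "Forever step s (Fin []) n \<Longrightarrow> DivSilent step s"
proof (coinduction arbitrary: s n rule: DivSilent.coinduct)
  case (DivSilent s n)
  then show ?case
  proof (cases rule: Forever.cases)
    case (1 t s' \<tau> m)
    then have "t = []" "\<tau> = Fin []"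
      by (cases \<tau>; simp)+
    with 1 show ?thesis by blast
  qed
qed

lemma Forever_emits_event:
  assumes "Forever step s \<tau> n" and "\<tau> \<noteq> Fin []"
  shows "\<exists>t s' \<tau>' m. star step s t s' \<and> t \<noteq> [] \<and> \<tau> = gconcat t \<tau>' \<and> Forever step s' \<tau>' m"
  using assms
proof (induction n arbitrary: s \<tau> rule: less_induct)
  case (less n s \<tau>)
  from less.prems(1) obtain t1 s1 \<tau>1 m where
    first: "step s t1 s1" and forever: "Forever step s1 \<tau>1 m" and guard: "guard \<tau>1 n t1 m"
    and \<tau>: "\<tau> = gconcat t1 \<tau>1"
    by (cases rule: Forever.cases) auto
  show ?case
  proof (cases "t1 = []")
    case True
    with \<tau> less.prems(2) guard have "\<tau>1 = \<tau>" "m < n"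
      by (auto simp: guard_def)
    with less.IH forever less.prems(2) obtain t s' \<tau>' m' where
      run: "star step s1 t s'" and "t \<noteq> []" "\<tau> = gconcat t \<tau>'" "Forever step s' \<tau>' m'"
      by blast
    moreover have "star step s t s'"
      using star_step[OF first run] True by simp
    ultimately show ?thesis
      by blast
  next
    case False
    with star_single[of step, OF first] forever \<tau> show ?thesis
      by blast
  qed
qed

lemma Forever_Fin_imp_ForeverFinite: "Forever step s (Fin t) n \<Longrightarrow> ForeverFinite step t s"
proof (induction "length t" arbitrary: t s n rule: less_induct)
  case less
  show ?case
  proof (cases "t = []")
    case True
    with less.prems have "DivSilent step s"
      using Forever_Nil_imp_DivSilent by simp
    with True show ?thesis
      unfolding ForeverFinite_def using star_refl[of step s] by auto
  next
    case False
    with Forever_emits_event[OF less.prems] obtain t1 s1 \<tau>' m where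
      star: "star step s t1 s1" and "t1 \<noteq> []" and t: "Fin t = gconcat t1 \<tau>'"
      and forever: "Forever step s1 \<tau>' m"
      by auto
    from t obtain t2 where t2: "\<tau>' = Fin t2" "t = t1 @ t2"
      by (cases \<tau>') auto
    with \<open>t1 \<noteq> []\<close> have "length t2 < length t"
      by simp
    from less.hyps[OF this] forever t2 obtain s' where "star step s1 t2 s'" "DivSilent step s'"
      unfolding ForeverFinite_def by blast
    with star_trans[OF star] show ?thesis
      unfolding ForeverFinite_def t2(2) by blast
  qed
qed

lemma Forever_Inf_imp_Reacts: "Forever step s (Inf \<omega>) n \<Longrightarrow> Reacts step \<omega> s"
proof (coinduction arbitrary: s \<omega> n rule: Reacts.coinduct)
  case (Reacts s \<omega> n)
  then obtain t s' \<tau>' m where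
    "star step s t s'" "t \<noteq> []" "Inf \<omega> = gconcat t \<tau>'" "Forever step s' \<tau>' m"
    using Forever_emits_event[of step s "Inf \<omega>" n] by auto
  then obtain \<omega>' where "\<omega> = t @- \<omega>'" "Forever step s' (Inf \<omega>') m"
    by (cases \<tau>') auto
  with \<open>star step s t s'\<close> \<open>t \<noteq> []\<close> show ?case
    by blast
qed

lemma DivSilent_imp_Forever_Nil: "DivSilent step s \<Longrightarrow> Forever step s (Fin []) 0"
proof (coinduction arbitrary: s rule: Forever.coinduct)
  case (Forever s)
  then obtain s' where "step s [] s'" "DivSilent step s'"
    by (cases rule: DivSilent.cases)
  moreover have "Fin [] = gconcat [] (Fin [])" and "guard (Fin []) 0 [] 0"
    by (simp_all add: guard_def)
  ultimately show ?case
    by blast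
qed

lemma Forever_star_prepend:
  "star step s t s' \<Longrightarrow> Forever step s' \<tau> m \<Longrightarrow> \<exists>n. Forever step s (gconcat t \<tau>) n"
proof (induction rule: star.induct)
  case (star_refl s)
  then show ?case by auto
next
  case (star_step s t1 s1 t2 s')
  then obtain n where "Forever step s1 (gconcat t2 \<tau>) n"
    by blast
  with star_step.hyps(1) have "Forever step s (gconcat t1 (gconcat t2 \<tau>)) (Suc n)"
    by (rule Forever.intros) (simp add: guard_def)
  then show ?case
    by auto
qed

lemma ForeverFinite_imp_Forever: "ForeverFinite step t s \<Longrightarrow> \<exists>n. Forever step s (Fin t) n"
  unfolding ForeverFinite_def
  using Forever_star_prepend[OF _ DivSilent_imp_Forever_Nil] by fastforce

lemma Reacts_unfold_starn:
  "Reacts step \<omega> s \<Longrightarrow>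
    \<exists>t s' \<omega>' k. starn step s t s' k \<and> t \<noteq> [] \<and> Reacts step \<omega>' s' \<and> \<omega> = t @- \<omega>'"
  by (erule Reacts.cases) (blast dest: star_imp_starn)

lemma starn_Reacts_imp_Forever:
  assumes "starn step s t s' k" and "t \<noteq> []" and "Reacts step \<omega> s'"
  shows "Forever step s (Inf (t @- \<omega>)) k"
  using assms
proof (coinduction arbitrary: s t s' k \<omega> rule: Forever.coinduct)
  case (Forever s t s' k \<omega>)
  from Forever(1,2) obtain t1 s1 t2 j where
    k: "k = Suc j" and first: "step s t1 s1" and run: "starn step s1 t2 s' j" and t: "t = t1 @ t2"
    by (cases rule: starn.cases) auto
  obtain u s'' \<omega>' i where
    "starn step s1 u s'' i" and "u \<noteq> []" and "Reacts step \<omega>' s''"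
    and \<omega>: "t2 @- \<omega> = u @- \<omega>'" and index: "t1 = [] \<longrightarrow> i < k"
  proof (cases "t2 = []")
    case True
    from Reacts_unfold_starn[OF Forever(3)] obtain u s'' \<omega>' i where
      run_u: "starn step s' u s'' i" and "u \<noteq> []" "Reacts step \<omega>' s''" "\<omega> = u @- \<omega>'"
      by blast
    moreover have "starn step s1 u s'' (j + i)"
      using starn_trans[OF run run_u] True by simp
    moreover have "t1 \<noteq> []"
      using True t Forever(2) by simp
    ultimately show ?thesis
      using that True by simp
  next
    case False
    show ?thesis
      using that[OF run False Forever(3) refl] k by simp
  qed
  moreover have "Inf (t @- \<omega>) = gconcat t1 (Inf (u @- \<omega>'))"
    using t \<omega> by simp
  moreover have "guard (Inf (u @- \<omega>')) k t1 i"
    using index by (simp add: guard_def)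
  ultimately show ?case
    using first by blast
qed

lemma Reacts_imp_Forever: "Reacts step \<omega> s \<Longrightarrow> \<exists>n. Forever step s (Inf \<omega>) n"
  by (blast dest: Reacts_unfold_starn starn_Reacts_imp_Forever)

theorem mainTheorem1:
  fixes step :: "'s \<Rightarrow> 'e list \<Rightarrow> 's \<Rightarrow> bool" and s :: 's
  shows "(\<forall>\<tau> n. Forever step s \<tau> n \<longrightarrow>
            (\<forall>t. \<tau> = Fin t \<longrightarrow> ForeverFinite step t s) \<and>
            (\<forall>\<omega>. \<tau> = Inf \<omega> \<longrightarrow> Reacts step \<omega> s))
       \<and> (determinate step \<longrightarrow>
            (\<forall>t. ForeverFinite step t s \<longrightarrow> (\<exists>n. Forever step s (Fin t) n)) \<and>
            (\<forall>\<omega>. Reacts step \<omega> s \<longrightarrow> (\<exists>n. Forever step s (Inf \<omega>) n)))"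
proof (intro conjI allI impI)
  fix \<tau> n t
  assume "Forever step s \<tau> n" and "\<tau> = Fin t"
  then show "ForeverFinite step t s"
    using Forever_Fin_imp_ForeverFinite by simp
next
  fix \<tau> n \<omega>
  assume "Forever step s \<tau> n" and "\<tau> = Inf \<omega>"
  then show "Reacts step \<omega> s"
    using Forever_Inf_imp_Reacts by simp
qed (simp_all add: ForeverFinite_imp_Forever Reacts_imp_Forever)

end
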